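(* Let $P=P_0\cup P_m$ be a finite poset with $P_0\cap P_m=\emptyset$, where $P_m=\{x_1,\dots,x_m\}$, and put $P_i=\{x_1,\dots,x_i\}$ for $i=1,\dots,m$ (and regard $P_0\cup P_i$ as induced subposets of $P$). Then $$\mathcal{F}(P)\cong(\cdots((\mathcal{F}(P_0)\boxplus\mathcal{F}((P_0\cup P_1)*x_1))\boxplus\mathcal{F}((P_0\cup P_2)*x_2))\boxplus\cdots\boxplus\mathcal{F}((P_0\cup P_{m-1})*x_{m-1}))\boxplus\mathcal{F}((P_0\cup P_m)*x_m),$$ that is, there are lattices $L_0=\mathcal{F}(P_0),L_1,\dots,L_m$ with $L_m\cong\mathcal{F}(P)$ such that for each $i$, $L_i=L_{i-1}\boxplus K_i$ for some cutting $K_i$ of $L_{i-1}$ with $K_i\cong\mathcal{F}((P_0\cup P_i)*x_i)$.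
   Context: For a finite poset $P$, $\mathcal{F}(P)$ is the set of filters (up-sets) of $P$ ordered by reverse inclusion; it is a finite distributive lattice with least element $P$ and greatest element $\emptyset$, and $\mathcal{F}(\emptyset)$ is the one-element lattice. A cutting of a finite distributive lattice $L$ is an interval $K=[\hat0_K,\hat1_K]$ of $L$ such that every maximal chain of $L$ meets $K$. Every finite distributive lattice is isomorphic to some $\mathcal{F}(Q)$. For a cutting $K$ of $L=\mathcal{F}(Q)$, let $S=\hat0_K\setminus\hat1_K$, $S_0$ the set of maximal elements of $Q\setminus\hat0_K$, $S_1$ the set of minimal elements of $\hat1_K$. The poset $Q_K$ is $Q\cup\{x_K\}$ ($x_K$ new) where the order on $Q$ is unchanged, $z<x_K$ iff $z\le s$ for some $s\in S_0$, $x_K<y$ iff $y\ge s$ for some $s\in S_1$, and $x_K$ is incomparable to every element of $S$. The convex expansion is $L\boxplus K:=\mathcal{F}(Q_K)$. For a poset $Q$ and element $x$, $Q*x$ is the induced subposet of elements of $Q$ incomparable to $x$. *)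

theory Defs
  imports Main
begin

text \<open>A finite poset is a carrier set with an order relation (only its values on the carrier matter).\<close>
definition poset_on :: "'a set \<Rightarrow> ('a \<Rightarrow> 'a \<Rightarrow> bool) \<Rightarrow> bool" where
  "poset_on A le \<longleftrightarrow> (\<forall>x\<in>A. le x x) \<and>
     (\<forall>x\<in>A. \<forall>y\<in>A. le x y \<and> le y x \<longrightarrow> x = y) \<and>
     (\<forall>x\<in>A. \<forall>y\<in>A. \<forall>z\<in>A. le x y \<and> le y z \<longrightarrow> le x z)"

text \<open>Filters (up-sets) of a poset; the lattice F(P) is this set ordered by reverse inclusion.\<close>
definition filters :: "'a set \<Rightarrow> ('a \<Rightarrow> 'a \<Rightarrow> bool) \<Rightarrow> 'a set set" where
  "filters A le = {F. F \<subseteq> A \<and> (\<forall>x\<in>F. \<forall>y\<in>A. le x y \<longrightarrow> y \<in> F)}"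

definition filt_le :: "'a set \<Rightarrow> 'a set \<Rightarrow> bool" where
  "filt_le F G \<longleftrightarrow> G \<subseteq> F"

definition order_iso :: "'a set \<Rightarrow> ('a \<Rightarrow> 'a \<Rightarrow> bool) \<Rightarrow> 'b set \<Rightarrow> ('b \<Rightarrow> 'b \<Rightarrow> bool) \<Rightarrow> bool" where
  "order_iso X r Y s \<longleftrightarrow> (\<exists>f. bij_betw f X Y \<and> (\<forall>x\<in>X. \<forall>y\<in>X. r x y \<longleftrightarrow> s (f x) (f y)))"

definition chain_in :: "'a set \<Rightarrow> ('a \<Rightarrow> 'a \<Rightarrow> bool) \<Rightarrow> 'a set \<Rightarrow> bool" where
  "chain_in X r C \<longleftrightarrow> C \<subseteq> X \<and> (\<forall>x\<in>C. \<forall>y\<in>C. r x y \<or> r y x)"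

definition maximal_chain :: "'a set \<Rightarrow> ('a \<Rightarrow> 'a \<Rightarrow> bool) \<Rightarrow> 'a set \<Rightarrow> bool" where
  "maximal_chain X r C \<longleftrightarrow> chain_in X r C \<and> (\<forall>D. chain_in X r D \<and> C \<subseteq> D \<longrightarrow> D = C)"

definition interval :: "'a set \<Rightarrow> ('a \<Rightarrow> 'a \<Rightarrow> bool) \<Rightarrow> 'a \<Rightarrow> 'a \<Rightarrow> 'a set" where
  "interval X r a b = {z\<in>X. r a z \<and> r z b}"

definition cutting :: "'a set \<Rightarrow> ('a \<Rightarrow> 'a \<Rightarrow> bool) \<Rightarrow> 'a \<Rightarrow> 'a \<Rightarrow> bool" where
  "cutting X r a b \<longleftrightarrow> a \<in> X \<and> b \<in> X \<and> r a b \<and>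
     (\<forall>C. maximal_chain X r C \<longrightarrow> C \<inter> interval X r a b \<noteq> {})"

text \<open>The order of Q_K, for the cutting K = [a, b] of F(Q) and new element x.\<close>
definition conv_exp_rel :: "'a set \<Rightarrow> ('a \<Rightarrow> 'a \<Rightarrow> bool) \<Rightarrow> 'a set \<Rightarrow> 'a set \<Rightarrow> 'a \<Rightarrow> 'a \<Rightarrow> 'a \<Rightarrow> bool" where
  "conv_exp_rel Q le a b x u v \<longleftrightarrow>
     (let S0 = {s\<in>Q - a. \<forall>t\<in>Q - a. le s t \<longrightarrow> t = s};
          S1 = {s\<in>b. \<forall>t\<in>b. le t s \<longrightarrow> t = s};
          S = a - b in
     (u \<in> Q \<and> v \<in> Q \<and> le u v) \<or> (u = x \<and> v = x) \<or>
     (u \<in> Q \<and> v = x \<and> u \<notin> S \<and> (\<exists>s\<in>S0. le u s)) \<or>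
     (u = x \<and> v \<in> Q \<and> v \<notin> S \<and> (\<exists>s\<in>S1. le s v)))"

text \<open>Q * x: elements of Q incomparable to x.\<close>
definition incomp_sub :: "'a set \<Rightarrow> ('a \<Rightarrow> 'a \<Rightarrow> bool) \<Rightarrow> 'a \<Rightarrow> 'a set" where
  "incomp_sub A le x = {y\<in>A. \<not> le y x \<and> \<not> le x y}"

end

theory Submission
  imports Defs
begin

text \<open>Adjoining one new element x to a finite poset Q is a convex expansion of F(Q). Take
  K = [a, b] with a the filter of elements of Q not below x and b the filter of elements above x.
  Every maximal chain of F(Q) meets K because each element outside a lies below each element of b;
  F \<mapsto> F - b identifies K with F(a - b), and a - b = Q * x; and the order that the convex expansion
  puts on Q \<union> {x} is the original one, since the maximal elements below x and the minimal elements
  above x determine which elements of Q lie below or above x. Adjoining x_1, ..., x_m one at a time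
  yields the corollary.\<close>

lemma poset_on_subset: "poset_on A r \<Longrightarrow> B \<subseteq> A \<Longrightarrow> poset_on B r"
  unfolding poset_on_def by blast

lemma poset_on_inv_image:
  assumes "poset_on P le" "inj_on h A" "h ` A \<subseteq> P"
  shows "poset_on A (\<lambda>u v. le (h u) (h v))"
  using assms unfolding poset_on_def inj_on_def by (metis image_subset_iff)

lemma poset_on_converse: "poset_on A r \<Longrightarrow> poset_on A (\<lambda>x y. r y x)"
  unfolding poset_on_def by blast

lemma poset_on_finite_maximal_above:
  assumes "finite A" "poset_on A r" "u \<in> A"
  shows "\<exists>s\<in>A. r u s \<and> (\<forall>t\<in>A. r s t \<longrightarrow> t = s)"
proof -
  let ?less = "\<lambda>s t. r s t \<and> s \<noteq> t"
  have "asymp_on A ?less" "transp_on A ?less"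
    using assms(2) unfolding poset_on_def asymp_on_def transp_on_def by blast+
  moreover have "\<exists>s\<in>A. r u s" using assms(2,3) unfolding poset_on_def by blast
  ultimately obtain s where "s \<in> A" "r u s" and "\<forall>t\<in>A. ?less s t \<longrightarrow> \<not> r u t"
    using Finite_Set.bex_max_element_with_property[OF assms(1)] by blast
  then show ?thesis using assms(2,3) unfolding poset_on_def by metis
qed

lemma poset_on_finite_minimal_below:
  "finite A \<Longrightarrow> poset_on A r \<Longrightarrow> u \<in> A \<Longrightarrow> \<exists>s\<in>A. r s u \<and> (\<forall>t\<in>A. r t s \<longrightarrow> t = s)"
  using poset_on_finite_maximal_above[OF _ poset_on_converse] .

lemma order_iso_trans:
  assumes "order_iso X r Y s" "order_iso Y s Z t"
  shows "order_iso X r Z t"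
proof -
  from assms obtain f g where f: "bij_betw f X Y" "\<forall>x\<in>X. \<forall>y\<in>X. r x y \<longleftrightarrow> s (f x) (f y)"
    and g: "bij_betw g Y Z" "\<forall>x\<in>Y. \<forall>y\<in>Y. s x y \<longleftrightarrow> t (g x) (g y)"
    unfolding order_iso_def by blast
  have "bij_betw (g \<circ> f) X Z" using f g bij_betw_trans by blast
  moreover have "\<forall>x\<in>X. \<forall>y\<in>X. r x y \<longleftrightarrow> t ((g \<circ> f) x) ((g \<circ> f) y)"
    using f g by (auto simp: bij_betw_def)
  ultimately show ?thesis unfolding order_iso_def by blast
qed

lemma filters_cong:
  "\<forall>u\<in>A. \<forall>v\<in>A. r u v \<longleftrightarrow> s u v \<Longrightarrow> filters A r = filters A s"
  unfolding filters_def by blast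

lemma order_iso_filters:
  assumes bij: "bij_betw h A B" and mono: "\<forall>u\<in>A. \<forall>v\<in>A. r u v \<longleftrightarrow> s (h u) (h v)"
  shows "order_iso (filters A r) filt_le (filters B s) filt_le"
proof -
  have inj: "inj_on h A" and img: "h ` A = B" using bij by (auto simp: bij_betw_def)
  have "bij_betw (image h) (filters A r) (filters B s)"
  proof (rule bij_betw_byWitness[where f' = "\<lambda>G. {u\<in>A. h u \<in> G}"])
    show "\<forall>F\<in>filters A r. {u\<in>A. h u \<in> h ` F} = F"
      using inj unfolding filters_def inj_on_def by blast
    show "\<forall>G\<in>filters B s. h ` {u\<in>A. h u \<in> G} = G"
      using img unfolding filters_def by blast
    show "image h ` filters A r \<subseteq> filters B s"
      using img mono unfolding filters_def by blast
    show "(\<lambda>G. {u\<in>A. h u \<in> G}) ` filters B s \<subseteq> filters A r"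
      using img mono unfolding filters_def by blast
  qed
  moreover have "\<forall>F\<in>filters A r. \<forall>G\<in>filters A r. filt_le F G \<longleftrightarrow> filt_le (h ` F) (h ` G)"
    using inj unfolding filt_le_def filters_def inj_on_def by blast
  ultimately show ?thesis unfolding order_iso_def by blast
qed

lemma filters_incomp_sub_inv_image_iso:
  assumes "inj_on h A"
  shows "order_iso (filters (incomp_sub A (\<lambda>u v. le (h u) (h v)) y) (\<lambda>u v. le (h u) (h v))) filt_le
    (filters (incomp_sub (h ` A) le (h y)) le) filt_le"
proof (rule order_iso_filters)
  show "bij_betw h (incomp_sub A (\<lambda>u v. le (h u) (h v)) y) (incomp_sub (h ` A) le (h y))"
    using inj_on_subset[OF assms] unfolding bij_betw_def incomp_sub_def by auto
qed simp

lemma interval_filters_iso: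
  assumes a: "a \<in> filters Q r" and b: "b \<in> filters Q r" and ba: "b \<subseteq> a"
  shows "order_iso (interval (filters Q r) filt_le a b) filt_le (filters (a - b) r) filt_le"
proof -
  have "bij_betw (\<lambda>F. F - b) (interval (filters Q r) filt_le a b) (filters (a - b) r)"
  proof (rule bij_betw_byWitness[where f' = "\<lambda>G. G \<union> b"])
    show "\<forall>F\<in>interval (filters Q r) filt_le a b. F - b \<union> b = F"
      unfolding interval_def filt_le_def by blast
    show "\<forall>G\<in>filters (a - b) r. G \<union> b - b = G"
      unfolding filters_def by blast
    show "(\<lambda>F. F - b) ` interval (filters Q r) filt_le a b \<subseteq> filters (a - b) r"
      using a unfolding interval_def filt_le_def filters_def by blast
    show "(\<lambda>G. G \<union> b) ` filters (a - b) r \<subseteq> interval (filters Q r) filt_le a b"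
      using a b ba unfolding interval_def filt_le_def filters_def by blast
  qed
  moreover have "\<forall>F\<in>interval (filters Q r) filt_le a b. \<forall>G\<in>interval (filters Q r) filt_le a b.
      filt_le F G \<longleftrightarrow> filt_le (F - b) (G - b)"
    unfolding interval_def filt_le_def by blast
  ultimately show ?thesis unfolding order_iso_def by blast
qed

lemma maximal_chain_filt_le_memI:
  assumes "maximal_chain X filt_le C" "F \<in> X" "\<forall>K\<in>C. K \<subseteq> F \<or> F \<subseteq> K"
  shows "F \<in> C"
proof -
  have "chain_in X filt_le (insert F C)"
    using assms unfolding maximal_chain_def chain_in_def filt_le_def by blast
  then show ?thesis using assms(1) unfolding maximal_chain_def by blast
qed

lemma maximal_chain_filters_Inter_mem:
  assumes C: "maximal_chain (filters Q r) filt_le C"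
  shows "Q \<inter> \<Inter>{K\<in>C. b \<subseteq> K} \<in> C"
proof (rule maximal_chain_filt_le_memI[OF C])
  have CX: "C \<subseteq> filters Q r" and comparable: "\<forall>K\<in>C. \<forall>K'\<in>C. K' \<subseteq> K \<or> K \<subseteq> K'"
    using C unfolding maximal_chain_def chain_in_def filt_le_def by auto
  then show "Q \<inter> \<Inter>{K\<in>C. b \<subseteq> K} \<in> filters Q r" unfolding filters_def by blast
  show "\<forall>K\<in>C. K \<subseteq> Q \<inter> \<Inter>{K\<in>C. b \<subseteq> K} \<or> Q \<inter> \<Inter>{K\<in>C. b \<subseteq> K} \<subseteq> K"
  proof
    fix K assume K: "K \<in> C"
    show "K \<subseteq> Q \<inter> \<Inter>{K\<in>C. b \<subseteq> K} \<or> Q \<inter> \<Inter>{K\<in>C. b \<subseteq> K} \<subseteq> K"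
    proof (cases "b \<subseteq> K")
      case False
      then have "\<forall>K'\<in>C. b \<subseteq> K' \<longrightarrow> K \<subseteq> K'" using comparable K by blast
      moreover have "K \<subseteq> Q" using K CX unfolding filters_def by blast
      ultimately show ?thesis by blast
    qed (use K in blast)
  qed
qed

lemma maximal_chain_filters_Union_mem:
  assumes C: "maximal_chain (filters Q r) filt_le C" and F: "F \<in> C"
    and b: "b \<in> filters Q r" "b \<subseteq> F"
  shows "\<Union>{K\<in>C. K \<subset> F} \<union> b \<in> C"
proof (rule maximal_chain_filt_le_memI[OF C])
  have CX: "C \<subseteq> filters Q r" and comparable: "\<forall>K\<in>C. \<forall>K'\<in>C. K' \<subseteq> K \<or> K \<subseteq> K'"
    using C unfolding maximal_chain_def chain_in_def filt_le_def by auto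
  then show "\<Union>{K\<in>C. K \<subset> F} \<union> b \<in> filters Q r" using b unfolding filters_def by blast
  show "\<forall>K\<in>C. K \<subseteq> \<Union>{K\<in>C. K \<subset> F} \<union> b \<or> \<Union>{K\<in>C. K \<subset> F} \<union> b \<subseteq> K"
  proof
    fix K assume K: "K \<in> C"
    show "K \<subseteq> \<Union>{K\<in>C. K \<subset> F} \<union> b \<or> \<Union>{K\<in>C. K \<subset> F} \<union> b \<subseteq> K"
    proof (cases "K \<subset> F")
      case False
      then have "F \<subseteq> K" using comparable K F by blast
      then show ?thesis using b by blast
    qed (use K in blast)
  qed
qed

text \<open>Let F be the smallest member of the chain containing b. The union of the members strictly
  inside F, enlarged by b, is again on the chain and hence contains F. So an element of F outside a
  lies in a member strictly inside F; being below all of b, it forces that member to contain b,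
  contradicting the choice of F. Hence F \<in> [a, b].\<close>
lemma cutting_filtersI:
  assumes a: "a \<in> filters Q r" and b: "b \<in> filters Q r" and ba: "b \<subseteq> a"
    and below: "\<forall>z\<in>Q - a. \<forall>y\<in>b. r z y"
  shows "cutting (filters Q r) filt_le a b"
  unfolding cutting_def
proof (intro conjI allI impI)
  show "a \<in> filters Q r" "b \<in> filters Q r" "filt_le a b" using a b ba by (auto simp: filt_le_def)
  fix C assume C: "maximal_chain (filters Q r) filt_le C"
  have CX: "C \<subseteq> filters Q r"
    using C unfolding maximal_chain_def chain_in_def by auto
  have bQ: "b \<subseteq> Q" using b unfolding filters_def by auto
  define F where "F = Q \<inter> \<Inter>{K\<in>C. b \<subseteq> K}"
  have FC: "F \<in> C" and bF: "b \<subseteq> F"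
    using maximal_chain_filters_Inter_mem[OF C] bQ unfolding F_def by blast+
  have FGb: "F \<subseteq> \<Union>{K\<in>C. K \<subset> F} \<union> b"
    using maximal_chain_filters_Union_mem[OF C FC b bF] unfolding F_def by blast
  have "F \<subseteq> a"
  proof
    fix z assume zF: "z \<in> F"
    show "z \<in> a"
    proof (rule ccontr)
      assume "z \<notin> a"
      then obtain K where K: "K \<in> C" "K \<subset> F" "z \<in> K"
        using zF FGb ba by blast
      have "b \<subseteq> K" using K CX below zF \<open>z \<notin> a\<close> bQ unfolding F_def filters_def by blast
      then show False using K unfolding F_def by blast
    qed
  qed
  then have "F \<in> interval (filters Q r) filt_le a b"
    using FC CX bF unfolding interval_def filt_le_def by blast
  then show "C \<inter> interval (filters Q r) filt_le a b \<noteq> {}" using FC by blast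
qed

definition cut_bottom :: "'a set \<Rightarrow> ('a \<Rightarrow> 'a \<Rightarrow> bool) \<Rightarrow> 'a \<Rightarrow> 'a set" where
  "cut_bottom Q le x = {z\<in>Q. \<not> le z x}"

definition cut_top :: "'a set \<Rightarrow> ('a \<Rightarrow> 'a \<Rightarrow> bool) \<Rightarrow> 'a \<Rightarrow> 'a set" where
  "cut_top Q le x = {z\<in>Q. le x z}"

context
  fixes Q :: "'a set" and le :: "'a \<Rightarrow> 'a \<Rightarrow> bool" and x :: 'a
  assumes poset: "poset_on (insert x Q) le" and new: "x \<notin> Q"
begin

lemma cut_bottom_in_filters: "cut_bottom Q le x \<in> filters Q le"
  using poset unfolding cut_bottom_def filters_def poset_on_def by blast

lemma cut_top_in_filters: "cut_top Q le x \<in> filters Q le"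
  using poset unfolding cut_top_def filters_def poset_on_def by blast

lemma cut_top_subset_cut_bottom: "cut_top Q le x \<subseteq> cut_bottom Q le x"
  using poset new unfolding cut_top_def cut_bottom_def poset_on_def by blast

lemma cutting_cut: "cutting (filters Q le) filt_le (cut_bottom Q le x) (cut_top Q le x)"
proof (rule cutting_filtersI[OF cut_bottom_in_filters cut_top_in_filters cut_top_subset_cut_bottom])
  show "\<forall>z\<in>Q - cut_bottom Q le x. \<forall>y\<in>cut_top Q le x. le z y"
    using poset unfolding cut_bottom_def cut_top_def poset_on_def by blast
qed

lemma interval_cut_iso:
  "order_iso (interval (filters Q le) filt_le (cut_bottom Q le x) (cut_top Q le x)) filt_le
     (filters (incomp_sub (insert x Q) le x) le) filt_le"
proof -
  have "cut_bottom Q le x - cut_top Q le x = incomp_sub (insert x Q) le x"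
    using poset unfolding cut_bottom_def cut_top_def incomp_sub_def poset_on_def by blast
  then show ?thesis
    using interval_filters_iso[OF cut_bottom_in_filters cut_top_in_filters cut_top_subset_cut_bottom]
    by simp
qed

lemma conv_exp_rel_cut_below:
  assumes fin: "finite Q" and u: "u \<in> Q"
  shows "conv_exp_rel Q le (cut_bottom Q le x) (cut_top Q le x) x u x \<longleftrightarrow> le u x"
proof -
  let ?D = "Q - cut_bottom Q le x"
  have D: "?D = {z\<in>Q. le z x}" unfolding cut_bottom_def by blast
  have "conv_exp_rel Q le (cut_bottom Q le x) (cut_top Q le x) x u x \<longleftrightarrow>
      u \<notin> cut_bottom Q le x - cut_top Q le x \<and> (\<exists>s\<in>{s\<in>?D. \<forall>t\<in>?D. le s t \<longrightarrow> t = s}. le u s)"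
    using new u unfolding conv_exp_rel_def Let_def by auto
  also have "\<dots> \<longleftrightarrow> le u x"
  proof
    assume "le u x"
    moreover have "poset_on ?D le" by (rule poset_on_subset[OF poset]) blast
    ultimately show "u \<notin> cut_bottom Q le x - cut_top Q le x \<and>
        (\<exists>s\<in>{s\<in>?D. \<forall>t\<in>?D. le s t \<longrightarrow> t = s}. le u s)"
      using poset_on_finite_maximal_above[of ?D le u] fin u D by auto
  next
    assume "u \<notin> cut_bottom Q le x - cut_top Q le x \<and>
        (\<exists>s\<in>{s\<in>?D. \<forall>t\<in>?D. le s t \<longrightarrow> t = s}. le u s)"
    then obtain s where "s \<in> Q" "le u s" "le s x" using D by blast
    then show "le u x" using poset u unfolding poset_on_def by (meson insertI1 insertI2)
  qed
  finally show ?thesis .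
qed

lemma conv_exp_rel_cut_above:
  assumes fin: "finite Q" and v: "v \<in> Q"
  shows "conv_exp_rel Q le (cut_bottom Q le x) (cut_top Q le x) x x v \<longleftrightarrow> le x v"
proof -
  let ?U = "cut_top Q le x"
  have "conv_exp_rel Q le (cut_bottom Q le x) ?U x x v \<longleftrightarrow>
      v \<notin> cut_bottom Q le x - ?U \<and> (\<exists>s\<in>{s\<in>?U. \<forall>t\<in>?U. le t s \<longrightarrow> t = s}. le s v)"
    using new v unfolding conv_exp_rel_def Let_def by auto
  also have "\<dots> \<longleftrightarrow> le x v"
  proof
    assume "le x v"
    moreover have "poset_on ?U le" by (rule poset_on_subset[OF poset]) (auto simp: cut_top_def)
    ultimately show "v \<notin> cut_bottom Q le x - ?U \<and> (\<exists>s\<in>{s\<in>?U. \<forall>t\<in>?U. le t s \<longrightarrow> t = s}. le s v)"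
      using poset_on_finite_minimal_below[of ?U le v] fin v by (auto simp: cut_top_def)
  next
    assume "v \<notin> cut_bottom Q le x - ?U \<and> (\<exists>s\<in>{s\<in>?U. \<forall>t\<in>?U. le t s \<longrightarrow> t = s}. le s v)"
    then obtain s where "s \<in> Q" "le x s" "le s v" unfolding cut_top_def by blast
    then show "le x v" using poset v unfolding poset_on_def by (meson insertI1 insertI2)
  qed
  finally show ?thesis .
qed

lemma conv_exp_rel_cut:
  assumes "finite Q" and u: "u \<in> insert x Q" and v: "v \<in> insert x Q"
  shows "conv_exp_rel Q le (cut_bottom Q le x) (cut_top Q le x) x u v \<longleftrightarrow> le u v"
proof -
  consider "u \<in> Q" "v \<in> Q" | "u = x" "v = x" | "u \<in> Q" "v = x" | "u = x" "v \<in> Q"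
    using u v by blast
  then show ?thesis
  proof cases
    case 1
    moreover have "u \<noteq> x" "v \<noteq> x" using 1 new by auto
    ultimately show ?thesis unfolding conv_exp_rel_def by simp
  next
    case 2
    then show ?thesis using poset unfolding conv_exp_rel_def poset_on_def by simp
  qed (simp_all add: conv_exp_rel_cut_below conv_exp_rel_cut_above assms)
qed

end

lemma conv_exp_rel_cong:
  assumes rs: "\<forall>u\<in>Q. \<forall>v\<in>Q. r u v \<longleftrightarrow> s u v" and bQ: "b \<subseteq> Q"
  shows "conv_exp_rel Q r a b x = conv_exp_rel Q s a b x"
proof (intro ext)
  fix u v
  let ?S0 = "\<lambda>r. {m\<in>Q - a. \<forall>t\<in>Q - a. r m t \<longrightarrow> t = m}"
  let ?S1 = "\<lambda>r. {m\<in>b. \<forall>t\<in>b. r t m \<longrightarrow> t = m}"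
  have "?S0 r = ?S0 s" "?S1 r = ?S1 s"
    using rs bQ by blast+
  moreover have "u \<in> Q \<Longrightarrow> (\<exists>m\<in>?S0 s. r u m) \<longleftrightarrow> (\<exists>m\<in>?S0 s. s u m)"
    using rs by blast
  moreover have "v \<in> Q \<Longrightarrow> (\<exists>m\<in>?S1 s. r m v) \<longleftrightarrow> (\<exists>m\<in>?S1 s. s m v)"
    using rs bQ by blast
  ultimately show "conv_exp_rel Q r a b x u v = conv_exp_rel Q s a b x u v"
    unfolding conv_exp_rel_def Let_def using rs by auto
qed

text \<open>The poset P0 \<union> P_i is modelled on Inl ` P0 \<union> Inr ` {1..i}, where Inr j stands for
  x_j = xs ! (j - 1).\<close>
definition label :: "'a list \<Rightarrow> 'a + nat \<Rightarrow> 'a" where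
  "label xs z = (case z of Inl p \<Rightarrow> p | Inr j \<Rightarrow> xs ! (j - 1))"

definition stage :: "'a set \<Rightarrow> nat \<Rightarrow> ('a + nat) set" where
  "stage P0 i = Inl ` P0 \<union> Inr ` {1..i}"

definition label_le :: "('a \<Rightarrow> 'a \<Rightarrow> bool) \<Rightarrow> 'a list \<Rightarrow> 'a + nat \<Rightarrow> 'a + nat \<Rightarrow> bool" where
  "label_le le xs = (\<lambda>u v. le (label xs u) (label xs v))"

text \<open>stage_rel P0 le xs i agrees with label_le le xs only on stage P0 i, which is why the
  congruence lemmas for filters and conv_exp_rel are needed.\<close>
primrec stage_rel :: "'a set \<Rightarrow> ('a \<Rightarrow> 'a \<Rightarrow> bool) \<Rightarrow> 'a list \<Rightarrow> nat \<Rightarrow> 'a + nat \<Rightarrow> 'a + nat \<Rightarrow> bool"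
  where
    "stage_rel P0 le xs 0 = label_le le xs"
  | "stage_rel P0 le xs (Suc i) =
      conv_exp_rel (stage P0 i) (stage_rel P0 le xs i)
        (cut_bottom (stage P0 i) (label_le le xs) (Inr (Suc i)))
        (cut_top (stage P0 i) (label_le le xs) (Inr (Suc i))) (Inr (Suc i))"

lemma stage_0: "stage P0 0 = Inl ` P0"
  by (simp add: stage_def)

lemma label_le_Inl: "label_le le xs (Inl p) (Inl q) \<longleftrightarrow> le p q"
  by (simp add: label_le_def label_def)

lemma stage_Suc: "stage P0 (Suc i) = insert (Inr (Suc i)) (stage P0 i)"
  by (auto simp: stage_def)

lemma Inr_Suc_notin_stage: "Inr (Suc i) \<notin> stage P0 i"
  by (auto simp: stage_def)

lemma finite_stage: "finite P0 \<Longrightarrow> finite (stage P0 i)"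
  by (simp add: stage_def)

locale adjoin_list =
  fixes P P0 :: "'a set" and le :: "'a \<Rightarrow> 'a \<Rightarrow> bool" and xs :: "'a list"
  assumes finite_P: "finite P" and poset_P: "poset_on P le"
    and P_eq: "P = P0 \<union> set xs" and disjoint: "P0 \<inter> set xs = {}" and distinct_xs: "distinct xs"
begin

lemma finite_P0: "finite P0"
  using finite_P P_eq by simp

lemma label_image_stage:
  assumes "i \<le> length xs"
  shows "label xs ` stage P0 i = P0 \<union> set (take i xs)"
proof -
  have "label xs ` Inr ` {1..i} = (!) xs ` {0..<i}"
    by (force simp: label_def image_iff)
  then show ?thesis
    using nth_image[OF assms] by (auto simp: stage_def label_def image_Un image_image)
qed

lemma inj_on_label_stage:
  assumes "i \<le> length xs"
  shows "inj_on (label xs) (stage P0 i)"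
proof -
  have "inj_on (label xs) (Inl ` P0)" by (auto simp: inj_on_def label_def)
  moreover have "inj_on (label xs) (Inr ` {1..i})"
    using assms distinct_xs by (auto simp: inj_on_def label_def nth_eq_iff_index_eq)
  moreover have "label xs ` Inl ` P0 \<subseteq> P0" "label xs ` Inr ` {1..i} \<subseteq> set xs"
    using assms by (auto simp: label_def)
  ultimately show ?thesis
    using disjoint unfolding stage_def inj_on_Un by blast
qed

lemma poset_on_stage:
  assumes "i \<le> length xs"
  shows "poset_on (stage P0 i) (label_le le xs)"
proof -
  have "label xs ` stage P0 i \<subseteq> P"
    using label_image_stage[OF assms] P_eq set_take_subset[of i xs] by auto
  then show ?thesis
    unfolding label_le_def by (rule poset_on_inv_image[OF poset_P inj_on_label_stage[OF assms]])
qed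

lemma poset_on_insert_stage:
  "i < length xs \<Longrightarrow> poset_on (insert (Inr (Suc i)) (stage P0 i)) (label_le le xs)"
  using poset_on_stage[of "Suc i"] by (simp add: stage_Suc)

lemma stage_rel_eq_label_le:
  "i \<le> length xs \<Longrightarrow> \<forall>u\<in>stage P0 i. \<forall>v\<in>stage P0 i. stage_rel P0 le xs i u v \<longleftrightarrow> label_le le xs u v"
proof (induction i)
  case 0
  then show ?case by simp
next
  case (Suc i)
  let ?Q = "stage P0 i" and ?y = "Inr (Suc i)"
  have poset: "poset_on (insert ?y ?Q) (label_le le xs)"
    using poset_on_insert_stage Suc.prems by simp
  have "finite ?Q" using finite_stage finite_P0 by blast
  moreover have "stage_rel P0 le xs (Suc i) =
      conv_exp_rel ?Q (label_le le xs) (cut_bottom ?Q (label_le le xs) ?y) (cut_top ?Q (label_le le xs) ?y) ?y"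
    using Suc by (auto intro: conv_exp_rel_cong simp: cut_top_def)
  ultimately show ?case
    unfolding stage_Suc using conv_exp_rel_cut[OF poset Inr_Suc_notin_stage] by simp
qed

lemma filters_stage_rel:
  "i \<le> length xs \<Longrightarrow> filters (stage P0 i) (stage_rel P0 le xs i) = filters (stage P0 i) (label_le le xs)"
  by (intro filters_cong stage_rel_eq_label_le)

lemma cutting_stage:
  assumes "i < length xs"
  shows "cutting (filters (stage P0 i) (stage_rel P0 le xs i)) filt_le
    (cut_bottom (stage P0 i) (label_le le xs) (Inr (Suc i)))
    (cut_top (stage P0 i) (label_le le xs) (Inr (Suc i)))"
  using cutting_cut[OF poset_on_insert_stage[OF assms] Inr_Suc_notin_stage] filters_stage_rel assms
  by simp

lemma interval_stage_iso:
  assumes "i < length xs"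
  shows "order_iso
    (interval (filters (stage P0 i) (stage_rel P0 le xs i)) filt_le
      (cut_bottom (stage P0 i) (label_le le xs) (Inr (Suc i)))
      (cut_top (stage P0 i) (label_le le xs) (Inr (Suc i)))) filt_le
    (filters (incomp_sub (P0 \<union> set (take (Suc i) xs)) le (xs ! i)) le) filt_le"
proof -
  let ?y = "Inr (Suc i)"
  let ?A = "insert ?y (stage P0 i)"
  have image: "label xs ` ?A = P0 \<union> set (take (Suc i) xs)"
    using label_image_stage[of "Suc i"] assms by (simp add: stage_Suc)
  have inj: "inj_on (label xs) ?A"
    using inj_on_label_stage[of "Suc i"] assms by (simp add: stage_Suc)
  have label_y: "label xs ?y = xs ! i"
    by (simp add: label_def)
  have "order_iso
      (interval (filters (stage P0 i) (stage_rel P0 le xs i)) filt_le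
        (cut_bottom (stage P0 i) (label_le le xs) ?y) (cut_top (stage P0 i) (label_le le xs) ?y)) filt_le
      (filters (incomp_sub ?A (label_le le xs) ?y) (label_le le xs)) filt_le"
    using interval_cut_iso[OF poset_on_insert_stage[OF assms] Inr_Suc_notin_stage]
      filters_stage_rel assms by simp
  moreover have "order_iso (filters (incomp_sub ?A (label_le le xs) ?y) (label_le le xs)) filt_le
      (filters (incomp_sub (P0 \<union> set (take (Suc i) xs)) le (xs ! i)) le) filt_le"
    using filters_incomp_sub_inv_image_iso[OF inj, of le ?y] unfolding label_le_def image label_y .
  ultimately show ?thesis
    by (rule order_iso_trans)
qed

lemma filters_stage_iso:
  "order_iso (filters (stage P0 (length xs)) (stage_rel P0 le xs (length xs))) filt_le (filters P le) filt_le"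
proof -
  have "bij_betw (label xs) (stage P0 (length xs)) P"
    using inj_on_label_stage[of "length xs"] label_image_stage[of "length xs"] P_eq
    by (simp add: bij_betw_def)
  then have "order_iso (filters (stage P0 (length xs)) (label_le le xs)) filt_le (filters P le) filt_le"
    by (rule order_iso_filters) (simp add: label_le_def)
  then show ?thesis
    using filters_stage_rel[of "length xs"] by simp
qed

end

theorem corollary1:
  fixes P P0 :: "'a set" and le :: "'a \<Rightarrow> 'a \<Rightarrow> bool" and xs :: "'a list"
  assumes "finite P" and "poset_on P le"
    and "P = P0 \<union> set xs" and "P0 \<inter> set xs = {}" and "distinct xs"
  shows "\<exists>(Q :: nat \<Rightarrow> ('a + nat) set) (R :: nat \<Rightarrow> ('a + nat) \<Rightarrow> ('a + nat) \<Rightarrow> bool)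
            (a :: nat \<Rightarrow> ('a + nat) set) (b :: nat \<Rightarrow> ('a + nat) set).
     Q 0 = Inl ` P0 \<and> (\<forall>p\<in>P0. \<forall>q\<in>P0. R 0 (Inl p) (Inl q) \<longleftrightarrow> le p q) \<and>
     (\<forall>i\<in>{1..length xs}.
        cutting (filters (Q (i - 1)) (R (i - 1))) filt_le (a i) (b i) \<and>
        order_iso (interval (filters (Q (i - 1)) (R (i - 1))) filt_le (a i) (b i)) filt_le
          (filters (incomp_sub (P0 \<union> set (take i xs)) le (xs ! (i - 1))) le) filt_le \<and>
        Inr i \<notin> Q (i - 1) \<and>
        Q i = insert (Inr i) (Q (i - 1)) \<and>
        R i = conv_exp_rel (Q (i - 1)) (R (i - 1)) (a i) (b i) (Inr i)) \<and>
     order_iso (filters (Q (length xs)) (R (length xs))) filt_le (filters P le) filt_le"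
proof -
  interpret adjoin_list P P0 le xs
    using assms by unfold_locales
  show ?thesis
    unfolding image_Suc_lessThan[symmetric]
    using cutting_stage interval_stage_iso filters_stage_iso
    by (intro exI[of _ "stage P0"] exI[of _ "stage_rel P0 le xs"]
        exI[of _ "\<lambda>i. cut_bottom (stage P0 (i - 1)) (label_le le xs) (Inr i)"]
        exI[of _ "\<lambda>i. cut_top (stage P0 (i - 1)) (label_le le xs) (Inr i)"])
      (simp add: stage_0 label_le_Inl stage_Suc Inr_Suc_notin_stage)
qed

end
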